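(* Let $m,n\in\mathbb{N}$ and let $\psi:\mathbb{F}[X]^m\to\{k^r:r\in\mathbb{Z}\}\cup\{0\}$ satisfy $\psi(\mathbf{q})\le1$ for all $\mathbf{q}$ and $\psi(\mathbf{q})>0$ for infinitely many $\mathbf{q}$. Then $$\min\{\delta(\psi),n\}\ge\min\{\eta(\psi),n\}.$$
   Context: $\mathbb{F}$ is a finite field with $k$ elements; for $\mathbf{q}\in\mathbb{F}[X]^m$, $|\mathbf{q}|_\infty=\max_i k^{\deg q_i}$. $\eta(\psi)=\inf\{\eta\in\mathbb{R}:\sum_{\mathbf{q}\in\mathbb{F}[X]^m\setminus\{0\}}|\mathbf{q}|_\infty^n(\psi(\mathbf{q})/|\mathbf{q}|_\infty)^\eta<\infty\}$. For $N>0$ and $v>0$: $C(N,v;\psi)=\#\{\mathbf{q}\in\mathbb{F}[X]^m\setminus\{0\}:|\mathbf{q}|_\infty\le N,\ \psi(\mathbf{q})\ge|\mathbf{q}|_\infty^{-v}\}$; when $C(N,v;\psi)\to\infty$, $\gamma(v;\psi)=\sup\{\gamma\in\mathbb{R}:\limsup_{N\to\infty}C(N,v;\psi)N^{-\gamma}>0\}$; $\delta(v;\psi)=\frac{n+\gamma(v;\psi)}{v+1}$ if $C(N,v;\psi)\to\infty$ as $N\to\infty$, and $\delta(v;\psi)=0$ otherwise; $\delta(\psi)=\sup_{v\ge0}\delta(v;\psi)$. *)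

theory Defs
  imports "HOL-Analysis.Analysis" "HOL-Computational_Algebra.Polynomial" "HOL-Library.Extended_Real"
begin

definition pabs :: "'a::{finite,field} poly \<Rightarrow> real" where
  "pabs p = (if p = 0 then 0 else real CARD('a) ^ degree p)"

definition vnorm :: "('a::{finite,field} poly ^ 'm::finite) \<Rightarrow> real" where
  "vnorm q = Max (range (\<lambda>i. pabs (q $ i)))"

definition eta_exp :: "nat \<Rightarrow> (('a::{finite,field} poly ^ 'm::finite) \<Rightarrow> real) \<Rightarrow> ereal" where
  "eta_exp n \<psi> = Inf (ereal ` {e::real.
      (\<lambda>q. vnorm q ^ n * (\<psi> q / vnorm q) powr e) summable_on (UNIV - {0})})"

definition count_C :: "real \<Rightarrow> real \<Rightarrow> (('a::{finite,field} poly ^ 'm::finite) \<Rightarrow> real) \<Rightarrow> nat" where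
  "count_C N v \<psi> = card {q. q \<noteq> 0 \<and> vnorm q \<le> N \<and> \<psi> q \<ge> vnorm q powr (- v)}"

definition gamma_exp :: "real \<Rightarrow> (('a::{finite,field} poly ^ 'm::finite) \<Rightarrow> real) \<Rightarrow> ereal" where
  "gamma_exp v \<psi> = Sup (ereal ` {g::real.
      Limsup at_top (\<lambda>N::real. ereal (real (count_C N v \<psi>) * N powr (- g))) > 0})"

definition delta_v :: "nat \<Rightarrow> real \<Rightarrow> (('a::{finite,field} poly ^ 'm::finite) \<Rightarrow> real) \<Rightarrow> ereal" where
  "delta_v n v \<psi> =
     (if filterlim (\<lambda>N::real. real (count_C N v \<psi>)) at_top at_top
      then (ereal (real n) + gamma_exp v \<psi>) / ereal (v + 1) else 0)"

definition delta_exp :: "nat \<Rightarrow> (('a::{finite,field} poly ^ 'm::finite) \<Rightarrow> real) \<Rightarrow> ereal" where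
  "delta_exp n \<psi> = (SUP v\<in>{0::real..}. delta_v n v \<psi>)"

end

theory Submission
  imports Defs
begin

text \<open>In fact \<eta>(\<psi>) \<le> \<delta>(\<psi>) for every \<psi> with values in [0, 1]: if \<delta>(\<psi>) < e' < e, the
  series defining \<eta> converges at exponent e. Slice the nonzero q into bands
  |q|^(-b) \<le> \<psi>(q) \<le> |q|^(-a) of width b - a \<le> (e - e') / (2e'). As \<delta>(b; \<psi>) < e', at most
  N^g vectors of norm \<le> N lie in such a band, for some g < e'(b + 1) - n, and each
  contributes at most |q|^(n - (a + 1)e); summing over the norm levels k^d gives a
  convergent geometric series. Finitely many bands cover \<psi>(q) \<ge> |q|^(-W), and for W
  large the remaining terms are dominated by the convergent series of |q|^(-(m + 1)).\<close>

lemma card_field_ge_2: "CARD('a::{finite,field}) \<ge> 2"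
proof -
  have "card {0::'a, 1} \<le> CARD('a)" by (rule card_mono) auto
  then show ?thesis by simp
qed

lemma pabs_le_vnorm: "pabs (q $ i) \<le> vnorm q"
  unfolding vnorm_def by (rule Max_ge) auto

lemma vnorm_attained: "\<exists>i. vnorm q = pabs (q $ i)"
proof -
  have "vnorm q \<in> range (\<lambda>i. pabs (q $ i))"
    unfolding vnorm_def by (rule Max_in) auto
  then show ?thesis by auto
qed

lemma vnorm_nonneg: "vnorm q \<ge> 0"
  using vnorm_attained[of q] by (auto simp: pabs_def)

lemma vnorm_eq_power:
  fixes q :: "'a::{finite,field} poly ^ 'm::finite"
  assumes "q \<noteq> 0"
  shows "\<exists>d. vnorm q = real CARD('a) ^ d"
proof -
  obtain j where "q $ j \<noteq> 0" using assms by (metis vec_eq_iff zero_index)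
  then have "0 < pabs (q $ j)"
    using card_field_ge_2[where 'a='a] by (simp add: pabs_def)
  then have "vnorm q \<noteq> 0"
    using pabs_le_vnorm[of q j] by linarith
  moreover obtain i where "vnorm q = pabs (q $ i)" using vnorm_attained by blast
  ultimately show ?thesis by (auto simp: pabs_def split: if_splits)
qed

lemma vnorm_ge_1:
  fixes q :: "'a::{finite,field} poly ^ 'm::finite"
  assumes "q \<noteq> 0"
  shows "vnorm q \<ge> 1"
  using vnorm_eq_power[OF assms] card_field_ge_2[where 'a='a] by auto

lemma degree_le_if_vnorm_le:
  fixes q :: "'a::{finite,field} poly ^ 'm::finite"
  assumes "vnorm q \<le> real CARD('a) ^ D"
  shows "degree (q $ i) \<le> D"
proof (cases "q $ i = 0")
  case False
  then have "real CARD('a) ^ degree (q $ i) \<le> real CARD('a) ^ D"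
    using pabs_le_vnorm[of q i] assms by (simp add: pabs_def)
  then show ?thesis
    using card_field_ge_2[where 'a='a] by (intro power_le_imp_le_exp) auto
qed simp

lemma finite_card_bounded_degree:
  fixes D :: nat
  defines "B \<equiv> {q::'a::{finite,field} poly ^ 'm::finite. \<forall>i. degree (q $ i) \<le> D}"
  shows "finite B" "card B \<le> CARD('a) ^ (CARD('m) * (D + 1))"
proof -
  define coeffs_of where
    "coeffs_of q = restrict (\<lambda>(i, j). coeff (q $ i) j) (UNIV \<times> {..D})" for q :: "'a poly ^ 'm"
  let ?F = "((UNIV :: 'm set) \<times> {..D}) \<rightarrow>\<^sub>E (UNIV :: 'a set)"
  have "inj_on coeffs_of B"
  proof (rule inj_onI)
    fix p q assume pq: "p \<in> B" "q \<in> B" "coeffs_of p = coeffs_of q"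
    have "coeff (p $ i) j = coeff (q $ i) j" for i j
    proof (cases "j \<le> D")
      case True
      then show ?thesis using fun_cong[OF pq(3), of "(i, j)"] by (simp add: coeffs_of_def)
    next
      case False
      then have "degree (p $ i) < j" "degree (q $ i) < j"
        using pq(1,2) by (auto simp: B_def intro: le_less_trans)
      then show ?thesis by (simp add: coeff_eq_0)
    qed
    then show "p = q" by (simp add: vec_eq_iff poly_eq_iff)
  qed
  moreover have "coeffs_of ` B \<subseteq> ?F"
    unfolding coeffs_of_def by (intro image_subsetI restrict_PiE_iff[THEN iffD2]) simp
  moreover have "finite ?F" by (intro finite_PiE) auto
  moreover have "card ?F = CARD('a) ^ (CARD('m) * (D + 1))"
    by (simp add: card_funcsetE card_cartesian_product)
  ultimately show "finite B" "card B \<le> CARD('a) ^ (CARD('m) * (D + 1))"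
    using inj_on_finite[of coeffs_of B ?F] card_inj_on_le[of coeffs_of B ?F] by simp_all
qed

lemma finite_card_vnorm_le_power:
  fixes D :: nat
  defines "V \<equiv> {q::'a::{finite,field} poly ^ 'm::finite. vnorm q \<le> real CARD('a) ^ D}"
  shows "finite V" "card V \<le> CARD('a) ^ (CARD('m) * (D + 1))"
proof -
  have sub: "V \<subseteq> {q. \<forall>i. degree (q $ i) \<le> D}"
    unfolding V_def using degree_le_if_vnorm_le by blast
  note B = finite_card_bounded_degree[of D, where 'a='a and 'm='m]
  show "finite V" using finite_subset[OF sub B(1)] .
  show "card V \<le> CARD('a) ^ (CARD('m) * (D + 1))"
    using card_mono[OF B(1) sub] B(2) by linarith
qed

lemma finite_vnorm_le: "finite {q::'a::{finite,field} poly ^ 'm::finite. vnorm q \<le> N}"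
proof -
  obtain D where "N < real CARD('a) ^ D"
    using real_arch_pow[of "real CARD('a)"] card_field_ge_2[where 'a='a] by fastforce
  then have "{q::'a poly ^ 'm. vnorm q \<le> N} \<subseteq> {q. vnorm q \<le> real CARD('a) ^ D}" by auto
  then show ?thesis using finite_card_vnorm_le_power(1) finite_subset by blast
qed

text \<open>Group A by norm levels: the q \<in> A with |q| = k^d contribute at most
  #{q \<in> A. |q| \<le> k^d} \<cdot> k^(-sd), which is eventually at most C \<cdot> (k^(g-s))^d.\<close>
lemma summable_on_vnorm_powr:
  fixes A :: "('a::{finite,field} poly ^ 'm::finite) set"
  assumes "0 \<notin> A"
    and count: "\<forall>\<^sub>F d in sequentially.
      real (card {q\<in>A. vnorm q \<le> real CARD('a) ^ d}) \<le> C * (real CARD('a) ^ d) powr g"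
    and "g < s"
  shows "(\<lambda>q. vnorm q powr (-s)) summable_on A"
proof -
  define k where "k = real CARD('a)"
  have k: "k > 1" using card_field_ge_2[where 'a='a] by (simp add: k_def)
  have "\<forall>q\<in>A. \<exists>d. vnorm q = k ^ d"
    using vnorm_eq_power \<open>0 \<notin> A\<close> unfolding k_def by metis
  then obtain lev where lev: "\<And>q. q \<in> A \<Longrightarrow> vnorm q = k ^ lev q" by metis
  define c where "c d = real (card {q\<in>A. vnorm q \<le> k ^ d}) * (k ^ d) powr (-s)" for d
  have c_nonneg: "c d \<ge> 0" for d by (simp add: c_def)
  have "summable c"
  proof (rule summable_comparison_test_ev)
    show "\<forall>\<^sub>F d in sequentially. norm (c d) \<le> C * (k powr (g - s)) ^ d"
      using count
    proof eventually_elim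
      case (elim d)
      have "(k ^ d) powr g * (k ^ d) powr (-s) = (k powr real d) powr (g - s)"
        using k by (simp add: powr_add[symmetric] powr_realpow)
      also have "\<dots> = (k powr (g - s)) ^ d"
        using k by (simp add: powr_powr mult.commute powr_realpow[symmetric])
      finally have eq: "(k ^ d) powr g * (k ^ d) powr (-s) = (k powr (g - s)) ^ d" .
      have "norm (c d) \<le> C * (k ^ d) powr g * (k ^ d) powr (-s)"
        using elim c_nonneg by (simp add: c_def k_def mult_right_mono)
      also have "\<dots> = C * (k powr (g - s)) ^ d"
        by (simp only: mult.assoc eq)
      finally show ?case .
    qed
    show "summable (\<lambda>d. C * (k powr (g - s)) ^ d)"
      using k \<open>g < s\<close> by (intro summable_mult summable_geometric) (auto intro: powr_less_one)
  qed
  have "sum (\<lambda>q. vnorm q powr (-s)) F \<le> suminf c" if F: "F \<subseteq> A" "finite F" for F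
  proof -
    define D where "D = Max (lev ` F)"
    have "lev ` F \<subseteq> {..D}" using F by (auto simp: D_def)
    then have "sum (\<lambda>q. vnorm q powr (-s)) F
        = (\<Sum>d\<le>D. sum (\<lambda>q. vnorm q powr (-s)) {q\<in>F. lev q = d})"
      by (rule sum.group[OF F(2) finite_atMost, symmetric])
    also have "\<dots> \<le> (\<Sum>d\<le>D. c d)"
    proof (rule sum_mono)
      fix d
      have "{q\<in>F. lev q = d} \<subseteq> {q\<in>A. vnorm q \<le> k ^ d}" using F lev by auto
      moreover have "finite {q\<in>A. vnorm q \<le> k ^ d}"
        using finite_vnorm_le by (rule finite_subset[rotated]) auto
      ultimately have "card {q\<in>F. lev q = d} \<le> card {q\<in>A. vnorm q \<le> k ^ d}"
        by (rule card_mono[rotated])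
      moreover have "sum (\<lambda>q. vnorm q powr (-s)) {q\<in>F. lev q = d}
          = sum (\<lambda>q. (k ^ d) powr (-s)) {q\<in>F. lev q = d}"
        using F lev by (intro sum.cong) auto
      ultimately show "sum (\<lambda>q. vnorm q powr (-s)) {q\<in>F. lev q = d} \<le> c d"
        unfolding c_def by (simp add: mult_right_mono)
    qed
    also have "\<dots> \<le> suminf c"
      using \<open>summable c\<close> c_nonneg by (intro sum_le_suminf) auto
    finally show ?thesis .
  qed
  then show ?thesis
    by (intro nonneg_bdd_above_summable_on bdd_aboveI) auto
qed

lemma summable_on_vnorm_powr_nonzero:
  "(\<lambda>q. vnorm q powr (- (real CARD('m) + 1)))
    summable_on (UNIV - {0::'a::{finite,field} poly ^ 'm::finite})"
proof -
  define k where "k = real CARD('a)"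
  have k: "k > 1" using card_field_ge_2[where 'a='a] by (simp add: k_def)
  have "real (card {q \<in> UNIV - {0::'a poly ^ 'm}. vnorm q \<le> k ^ d})
      \<le> k ^ CARD('m) * (k ^ d) powr real CARD('m)" for d
  proof -
    have "card {q \<in> UNIV - {0::'a poly ^ 'm}. vnorm q \<le> k ^ d}
        \<le> card {q::'a poly ^ 'm. vnorm q \<le> k ^ d}"
      using finite_card_vnorm_le_power(1)[of d] by (intro card_mono) (auto simp: k_def)
    also have "\<dots> \<le> CARD('a) ^ (CARD('m) * (d + 1))"
      using finite_card_vnorm_le_power(2)[of d] by (simp add: k_def)
    finally have "real (card {q \<in> UNIV - {0::'a poly ^ 'm}. vnorm q \<le> k ^ d})
        \<le> k ^ (CARD('m) * (d + 1))"
      unfolding k_def of_nat_power[symmetric] of_nat_le_iff .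
    also have "\<dots> = k ^ CARD('m) * (k ^ d) ^ CARD('m)"
      by (simp add: power_add power_mult_distrib[symmetric] power_mult[symmetric] mult.commute)
    also have "\<dots> = k ^ CARD('m) * (k ^ d) powr real CARD('m)"
      using k by (simp add: powr_realpow)
    finally show ?thesis .
  qed
  then show ?thesis
    unfolding k_def
    by (intro summable_on_vnorm_powr[where C="real CARD('a) ^ CARD('m)" and g="real CARD('m)"]
        always_eventually allI) auto
qed

definition approx_vectors ::
  "real \<Rightarrow> (('a::{finite,field} poly ^ 'm::finite) \<Rightarrow> real) \<Rightarrow> ('a poly ^ 'm) set" where
  "approx_vectors v \<psi> = {q. q \<noteq> 0 \<and> vnorm q powr (-v) \<le> \<psi> q}"

lemma count_C_eq_card_approx_vectors:
  "count_C N v \<psi> = card {q \<in> approx_vectors v \<psi>. vnorm q \<le> N}"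
  unfolding count_C_def approx_vectors_def by (rule arg_cong[where f=card]) auto

lemma filterlim_count_C:
  assumes "infinite (approx_vectors v \<psi>)"
  shows "filterlim (\<lambda>N. real (count_C N v \<psi>)) at_top at_top"
  unfolding filterlim_at_top
proof
  fix Z :: real
  obtain B where B: "finite B" "card B = nat \<lceil>Z\<rceil>" "B \<subseteq> approx_vectors v \<psi>"
    using infinite_arbitrarily_large[OF assms] by blast
  have "Z \<le> real (count_C N v \<psi>)" if "Max (insert 0 (vnorm ` B)) \<le> N" for N
  proof -
    have "B \<subseteq> {q \<in> approx_vectors v \<psi>. vnorm q \<le> N}"
      using B that by (auto intro: order_trans[OF Max_ge])
    moreover have "finite {q \<in> approx_vectors v \<psi>. vnorm q \<le> N}"
      using finite_vnorm_le by (rule finite_subset[rotated]) auto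
    ultimately have "card B \<le> count_C N v \<psi>"
      unfolding count_C_eq_card_approx_vectors by (rule card_mono[rotated])
    then show ?thesis using B(2) by linarith
  qed
  then show "\<forall>\<^sub>F N in at_top. Z \<le> real (count_C N v \<psi>)"
    using eventually_at_top_linorder by blast
qed

lemma eventually_count_C_less_powr:
  assumes "gamma_exp v \<psi> < ereal g"
  shows "\<forall>\<^sub>F N in at_top. real (count_C N v \<psi>) < N powr g"
proof -
  have "ereal g \<le> gamma_exp v \<psi>"
    if "Limsup at_top (\<lambda>N. ereal (real (count_C N v \<psi>) * N powr (- g))) > 0"
    using that unfolding gamma_exp_def by (intro Sup_upper) auto
  then have "\<not> Limsup at_top (\<lambda>N. ereal (real (count_C N v \<psi>) * N powr (- g))) > 0"
    using assms by auto
  then have "\<forall>\<^sub>F N in at_top. ereal (real (count_C N v \<psi>) * N powr (- g)) < 1"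
    by (intro Limsup_lessD) (simp add: not_less le_less_trans)
  then show ?thesis
    using eventually_gt_at_top[of 0]
    by eventually_elim (simp add: powr_minus divide_inverse[symmetric] pos_divide_less_eq)
qed

lemma gamma_exp_less_if_delta_v_less:
  assumes "filterlim (\<lambda>N. real (count_C N v \<psi>)) at_top at_top"
    and "delta_v n v \<psi> < ereal e" and "0 \<le> v"
  shows "gamma_exp v \<psi> < ereal (e * (v + 1) - real n)"
proof -
  have delta: "(ereal (real n) + gamma_exp v \<psi>) / ereal (v + 1) < ereal e"
    using assms unfolding delta_v_def by simp
  show ?thesis
  proof (cases "gamma_exp v \<psi>")
    case (real c)
    then have "(real n + c) / (v + 1) < e" using delta \<open>0 \<le> v\<close> by simp
    then show ?thesis using real \<open>0 \<le> v\<close> by (simp add: divide_less_eq algebra_simps)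
  next
    case PInf
    then show ?thesis using delta \<open>0 \<le> v\<close> by simp
  qed simp
qed

lemma delta_v_le_delta_exp: "0 \<le> v \<Longrightarrow> delta_v n v \<psi> \<le> delta_exp n \<psi>"
  unfolding delta_exp_def by (rule SUP_upper) simp

text \<open>Witnessed by v = 0: if C(N, 0) \<rightarrow> \<infinity>, then \<gamma>(0) \<ge> 0.\<close>
lemma delta_exp_nonneg: "0 \<le> delta_exp n \<psi>"
proof -
  have "0 \<le> delta_v n 0 \<psi>"
  proof (cases "filterlim (\<lambda>N. real (count_C N 0 \<psi>)) at_top at_top")
    case True
    then have "\<forall>\<^sub>F N in at_top. 1 \<le> real (count_C N 0 \<psi>)"
      unfolding filterlim_at_top by blast
    then have "\<forall>\<^sub>F N in at_top. ereal 1 \<le> ereal (real (count_C N 0 \<psi>) * N powr (- 0))"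
      using eventually_gt_at_top[of 0] by eventually_elim simp
    then have "ereal 1 \<le> Limsup at_top (\<lambda>N. ereal (real (count_C N 0 \<psi>) * N powr (- 0)))"
      by (intro le_Limsup) auto
    then have "0 < Limsup at_top (\<lambda>N. ereal (real (count_C N 0 \<psi>) * N powr (- 0)))"
      by (rule less_le_trans[rotated]) simp
    then have "ereal 0 \<le> gamma_exp 0 \<psi>"
      unfolding gamma_exp_def by (intro Sup_upper imageI CollectI)
    then show ?thesis
      using True by (simp add: delta_v_def one_ereal_def[symmetric] zero_ereal_def[symmetric])
  qed (simp add: delta_v_def)
  then show ?thesis using delta_v_le_delta_exp[of 0] by (rule order_trans) simp
qed

lemma approx_vectors_mono:
  assumes "b \<le> b'"
  shows "approx_vectors b \<psi> \<subseteq> approx_vectors b' \<psi>"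
proof
  fix q assume "q \<in> approx_vectors b \<psi>"
  then have "q \<noteq> 0" "vnorm q powr (-b) \<le> \<psi> q" by (auto simp: approx_vectors_def)
  moreover have "vnorm q powr (-b') \<le> vnorm q powr (-b)"
    using assms vnorm_ge_1[OF \<open>q \<noteq> 0\<close>] by (intro powr_mono) auto
  ultimately show "q \<in> approx_vectors b' \<psi>" by (simp add: approx_vectors_def)
qed

abbreviation eta_summand ::
  "nat \<Rightarrow> (('a::{finite,field} poly ^ 'm::finite) \<Rightarrow> real) \<Rightarrow> real \<Rightarrow> 'a poly ^ 'm \<Rightarrow> real" where
  "eta_summand n \<psi> e q \<equiv> vnorm q ^ n * (\<psi> q / vnorm q) powr e"

lemma eta_summand_le_vnorm_powr:
  fixes q :: "'a::{finite,field} poly ^ 'm::finite"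
  assumes "q \<noteq> 0" and p: "0 \<le> \<psi> q" "\<psi> q \<le> vnorm q powr (-a)" and "0 \<le> e"
  shows "eta_summand n \<psi> e q \<le> vnorm q powr (real n - (a + 1) * e)"
proof -
  have x: "vnorm q \<ge> 1" using vnorm_ge_1[OF \<open>q \<noteq> 0\<close>] .
  then have "\<psi> q / vnorm q \<le> vnorm q powr (-a - 1)"
    using p by (simp add: powr_diff divide_right_mono)
  then have "(\<psi> q / vnorm q) powr e \<le> (vnorm q powr (-a - 1)) powr e"
    using p x \<open>0 \<le> e\<close> by (simp add: powr_mono2)
  also have "\<dots> = vnorm q powr (- (a + 1) * e)"
    by (simp add: powr_powr)
  finally have "eta_summand n \<psi> e q \<le> vnorm q powr real n * vnorm q powr (- (a + 1) * e)"
    using x by (simp add: powr_realpow mult_left_mono)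
  also have "\<dots> = vnorm q powr (real n - (a + 1) * e)"
    by (simp add: powr_add[symmetric] algebra_simps)
  finally show ?thesis .
qed

text \<open>On the band |q|^(-b) \<le> \<psi>(q) \<le> |q|^(-a), the summand is at most |q|^(n - (a+1)e),
  while \<delta>(b) < e' bounds the number of such q with |q| \<le> N by N^g for some
  g < e'(b + 1) - n; a narrow band makes the difference of exponents positive.\<close>
lemma summable_on_eta_summand_band:
  fixes \<psi> :: "('a::{finite,field} poly ^ 'm::finite) \<Rightarrow> real"
  assumes delta: "delta_exp n \<psi> < ereal e'" and "e' < e"
    and ab: "0 \<le> a" "a \<le> b" "e' * (b - a) \<le> (e - e') / 2"
    and nonneg: "\<And>q. 0 \<le> \<psi> q"
  shows "eta_summand n \<psi> e summable_on {q \<in> approx_vectors b \<psi>. \<psi> q \<le> vnorm q powr (-a)}"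
proof -
  define s where "s = (a + 1) * e - real n"
  define k where "k = real CARD('a)"
  have k: "k > 1" using card_field_ge_2[where 'a='a] by (simp add: k_def)
  have "(\<lambda>q. vnorm q powr (-s)) summable_on approx_vectors b \<psi>"
  proof (cases "finite (approx_vectors b \<psi>)")
    case False
    have "delta_v n b \<psi> < ereal e'"
      using delta_v_le_delta_exp[of b n \<psi>] delta ab by simp
    then have "gamma_exp b \<psi> < ereal (e' * (b + 1) - real n)"
      using filterlim_count_C[OF False] ab by (intro gamma_exp_less_if_delta_v_less) auto
    from ereal_dense2[OF this] obtain g
      where g: "gamma_exp b \<psi> < ereal g" "g < e' * (b + 1) - real n"
      by auto
    have "0 \<le> a * (e - e')" using ab \<open>e' < e\<close> by simp
    then have "0 < (e - e') + a * (e - e') - e' * (b - a)"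
      using ab(3) \<open>e' < e\<close> by (simp add: algebra_simps)
    also have "\<dots> = s - (e' * (b + 1) - real n)"
      unfolding s_def by (simp add: algebra_simps)
    finally have "g < s"
      using g(2) by linarith
    have "filterlim (\<lambda>d. k ^ d) at_top sequentially"
      using filterlim_at_infinity_imp_norm_at_top[OF filterlim_realpow_sequentially_gt1, of k] k
      by simp
    then have "\<forall>\<^sub>F d in sequentially. real (count_C (k ^ d) b \<psi>) < (k ^ d) powr g"
      using eventually_count_C_less_powr[OF g(1)] by (rule eventually_compose_filterlim[rotated])
    then have "\<forall>\<^sub>F d in sequentially.
        real (card {q \<in> approx_vectors b \<psi>. vnorm q \<le> k ^ d}) \<le> 1 * (k ^ d) powr g"
      by eventually_elim (simp add: count_C_eq_card_approx_vectors)
    then show ?thesis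
      using \<open>g < s\<close> unfolding k_def
      by (intro summable_on_vnorm_powr[where C=1 and g=g]) (simp_all add: approx_vectors_def)
  qed (rule summable_on_finite)
  then show ?thesis
  proof (rule summable_on_comparison_test[OF summable_on_subset])
    fix q assume q: "q \<in> {q \<in> approx_vectors b \<psi>. \<psi> q \<le> vnorm q powr (-a)}"
    have "0 < ereal e'"
      using delta_exp_nonneg[of n \<psi>] delta by (rule le_less_trans)
    then have "0 \<le> e" using \<open>e' < e\<close> by simp
    moreover have "q \<noteq> 0" "\<psi> q \<le> vnorm q powr (-a)"
      using q by (auto simp: approx_vectors_def)
    ultimately show "eta_summand n \<psi> e q \<le> vnorm q powr (-s)"
      using eta_summand_le_vnorm_powr[of q \<psi> a e n] nonneg by (simp add: s_def)
    show "0 \<le> eta_summand n \<psi> e q" using vnorm_nonneg[of q] nonneg[of q] by simp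
  qed auto
qed

text \<open>Cover approx_vectors b by bands of width h = (e - e') / (2e') starting from the
  band 0 \<le> v \<le> 0, which contains approx_vectors 0 since \<psi> \<le> 1.\<close>
lemma summable_on_eta_summand_approx_vectors:
  fixes \<psi> :: "('a::{finite,field} poly ^ 'm::finite) \<Rightarrow> real"
  assumes delta: "delta_exp n \<psi> < ereal e" and "0 \<le> b"
    and nonneg: "\<And>q. 0 \<le> \<psi> q" and le1: "\<And>q. \<psi> q \<le> 1"
  shows "eta_summand n \<psi> e summable_on approx_vectors b \<psi>"
proof -
  from ereal_dense2[OF delta] obtain e' where e': "delta_exp n \<psi> < ereal e'" "e' < e"
    by auto
  have "0 < ereal e'" using delta_exp_nonneg[of n \<psi>] e'(1) by (rule le_less_trans)
  then have "0 < e'" by simp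
  define h where "h = (e - e') / (2 * e')"
  have h: "0 < h" "e' * h = (e - e') / 2"
    using \<open>0 < e'\<close> e'(2) by (auto simp: h_def)
  let ?band = "\<lambda>a b. {q \<in> approx_vectors b \<psi>. \<psi> q \<le> vnorm q powr (-a)}"
  have levels: "eta_summand n \<psi> e summable_on approx_vectors (real j * h) \<psi>" for j
  proof (induction j)
    case 0
    have "vnorm q \<noteq> 0" if "q \<noteq> 0" for q
      using vnorm_ge_1[OF that] by simp
    then have "approx_vectors 0 \<psi> \<subseteq> ?band 0 0"
      using le1 by (auto simp: approx_vectors_def)
    moreover have "eta_summand n \<psi> e summable_on ?band 0 0"
      using e' h nonneg by (intro summable_on_eta_summand_band) auto
    ultimately show ?case by (simp add: summable_on_subset)
  next
    case (Suc j)
    have cover: "approx_vectors (real (Suc j) * h) \<psi>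
        \<subseteq> approx_vectors (real j * h) \<psi> \<union> ?band (real j * h) (real (Suc j) * h)"
      by (auto simp: approx_vectors_def)
    have "e' * (real (Suc j) * h - real j * h) \<le> (e - e') / 2"
      using h(2) by (simp add: algebra_simps)
    then have "eta_summand n \<psi> e summable_on ?band (real j * h) (real (Suc j) * h)"
      using h(1) by (intro summable_on_eta_summand_band[OF e' _ _ _ nonneg]) auto
    from summable_on_union[OF Suc.IH this] cover show ?case
      by (rule summable_on_subset)
  qed
  have "b / h \<le> real (nat \<lceil>b / h\<rceil>)"
    by (rule real_nat_ceiling_ge)
  then have "b \<le> real (nat \<lceil>b / h\<rceil>) * h"
    using h(1) by (simp add: pos_divide_le_eq)
  then have "approx_vectors b \<psi> \<subseteq> approx_vectors (real (nat \<lceil>b / h\<rceil>) * h) \<psi>"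
    by (rule approx_vectors_mono)
  then show ?thesis
    by (rule summable_on_subset[OF levels])
qed

text \<open>Outside approx_vectors W the summand is at most |q|^(n - (W + 1)e), and for large W
  this is dominated by the convergent |q|^(-(m + 1)).\<close>
lemma summable_on_eta_summand:
  fixes \<psi> :: "('a::{finite,field} poly ^ 'm::finite) \<Rightarrow> real"
  assumes delta: "delta_exp n \<psi> < ereal e"
    and nonneg: "\<And>q. 0 \<le> \<psi> q" and le1: "\<And>q. \<psi> q \<le> 1"
  shows "eta_summand n \<psi> e summable_on (UNIV - {0})"
proof -
  have "0 < ereal e" using delta_exp_nonneg[of n \<psi>] delta by (rule le_less_trans)
  then have "0 < e" by simp
  define W where "W = (real n + real CARD('m) + 1) / e"
  have "(W + 1) * e = real n + real CARD('m) + 1 + e"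
    using \<open>0 < e\<close> by (simp add: W_def field_simps)
  then have W: "0 \<le> W" "real n - (W + 1) * e \<le> - (real CARD('m) + 1)"
    using \<open>0 < e\<close> by (auto simp: W_def)
  let ?T = "{q. q \<noteq> 0 \<and> \<psi> q \<le> vnorm q powr (-W)}"
  have "eta_summand n \<psi> e summable_on ?T"
  proof (rule summable_on_comparison_test[OF summable_on_subset[OF summable_on_vnorm_powr_nonzero]])
    fix q assume q: "q \<in> ?T"
    then have "eta_summand n \<psi> e q \<le> vnorm q powr (real n - (W + 1) * e)"
      using nonneg \<open>0 < e\<close> by (intro eta_summand_le_vnorm_powr) auto
    also have "\<dots> \<le> vnorm q powr (- (real CARD('m) + 1))"
      using q W vnorm_ge_1 by (intro powr_mono) auto
    finally show "eta_summand n \<psi> e q \<le> vnorm q powr (- (real CARD('m) + 1))" .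
    show "0 \<le> eta_summand n \<psi> e q" using vnorm_nonneg[of q] nonneg[of q] by simp
  qed auto
  moreover have "eta_summand n \<psi> e summable_on approx_vectors W \<psi>"
    by (rule summable_on_eta_summand_approx_vectors[OF delta W(1) nonneg le1])
  moreover have "UNIV - {0} \<subseteq> ?T \<union> approx_vectors W \<psi>"
    by (auto simp: approx_vectors_def)
  ultimately show ?thesis
    using summable_on_union summable_on_subset by blast
qed

lemma eta_exp_le_delta_exp:
  fixes \<psi> :: "('a::{finite,field} poly ^ 'm::finite) \<Rightarrow> real"
  assumes "\<And>q. 0 \<le> \<psi> q" and "\<And>q. \<psi> q \<le> 1"
  shows "eta_exp n \<psi> \<le> delta_exp n \<psi>"
proof (rule dense_ge)
  fix x assume "delta_exp n \<psi> < x"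
  then show "eta_exp n \<psi> \<le> x"
  proof (cases x)
    case (real e)
    then have "eta_summand n \<psi> e summable_on (UNIV - {0})"
      using \<open>delta_exp n \<psi> < x\<close> assms by (intro summable_on_eta_summand) auto
    then show ?thesis
      unfolding eta_exp_def real by (intro Inf_lower) auto
  qed auto
qed

theorem lemma13:
  fixes n :: nat and \<psi> :: "('a::{finite,field} poly ^ 'm::finite) \<Rightarrow> real"
  assumes vals: "\<And>q. \<psi> q = 0 \<or> (\<exists>r::int. \<psi> q = real CARD('a) powi r)"
    and le1: "\<And>q. \<psi> q \<le> 1"
    and inf: "infinite {q. \<psi> q > 0}"
  shows "min (delta_exp n \<psi>) (ereal (real n)) \<ge> min (eta_exp n \<psi>) (ereal (real n))"
proof -
  have "0 \<le> \<psi> q" for q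
    using vals[of q] card_field_ge_2[where 'a='a] by auto
  then have "eta_exp n \<psi> \<le> delta_exp n \<psi>"
    using le1 by (rule eta_exp_le_delta_exp)
  then show ?thesis by (rule min.mono) simp
qed

end
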